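(* Let $X$ be a nonempty discrete (finite or countable) set and $p^*$ a probability distribution on $X$ (the ground truth). Let $X^{\checkmark}=\{x\in X: p^*(x)>0\}$ (valid points) and $X^{\times}=\{x\in X:p^*(x)=0\}$ (invalid points). Let $x_1,\dots,x_N\in X^{\checkmark}$ ($N\ge1$) and $q(x)=\frac1N\#\{i:x_i=x\}$. Let $\hat p^*$ be any probability distribution on $X$ maximizing $\mathbb{E}_{q(x)}[p(x)]=\frac1N\sum_{i=1}^N p(x_i)$ over all probability distributions $p$ on $X$. Then $\hat p^*$ is sound: for all $x\in X$, $\hat p^*(x)>0$ implies $x\in X^{\checkmark}$ (equivalently, $x\in X^{\times}$ implies $\hat p^*(x)=0$).
   Context: A probability distribution on $X$ is $p:X\to[0,\infty)$ with $\sum_x p(x)=1$. A distribution $p$ "proves" $x$ when $p(x)>0$; $p$ is sound if every point it proves is valid. *)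

theory Defs
  imports "HOL-Probability.Probability"
begin

definition emp_exp :: "'a list \<Rightarrow> 'a pmf \<Rightarrow> real" where
  "emp_exp xs p = (1 / real (length xs)) * sum_list (map (pmf p) xs)"

definition sound :: "'a pmf \<Rightarrow> 'a pmf \<Rightarrow> bool" where
  "sound pstar p \<longleftrightarrow> (\<forall>x. pmf p x > 0 \<longrightarrow> pmf pstar x > 0)"

end

theory Submission
  imports Defs
begin

text \<open>A maximiser of the empirical expectation puts no mass outside the sample: otherwise moving
  the mass of an unsampled point onto a sampled one increases the empirical expectation. Since
  every sample point is valid, the maximiser is sound.\<close>

lemma pmf_map_pmf_merge:
  assumes "x \<noteq> z"
  shows "pmf (map_pmf (\<lambda>y. if y = z then x else y) p) w =
    (if w = x then pmf p x + pmf p z else if w = z then 0 else pmf p w)"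
proof -
  have "(\<lambda>y. if y = z then x else y) -` {w} =
      (if w = x then {x, z} else if w = z then {} else {w})"
    using assms by (auto split: if_splits)
  then show ?thesis
    using assms by (simp add: pmf_map measure_pmf_single measure_measure_pmf_finite)
qed

lemma emp_exp_strict_mono:
  assumes "\<forall>y\<in>set xs. pmf p y \<le> pmf q y" and "x \<in> set xs" and "pmf p x < pmf q x"
  shows "emp_exp xs p < emp_exp xs q"
proof -
  obtain ys zs where xs: "xs = ys @ x # zs"
    using split_list[OF assms(2)] by blast
  have "sum_list (map (pmf p) ys) \<le> sum_list (map (pmf q) ys)"
    and "sum_list (map (pmf p) zs) \<le> sum_list (map (pmf q) zs)"
    using assms(1) unfolding xs by (auto intro: sum_list_mono)
  then have "sum_list (map (pmf p) xs) < sum_list (map (pmf q) xs)"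
    using assms(3) unfolding xs by simp
  moreover have "length xs > 0"
    using assms(2) by (cases xs) auto
  ultimately show ?thesis
    unfolding emp_exp_def by (simp add: divide_strict_right_mono)
qed

lemma emp_exp_maximiser_vanishes_off_sample:
  assumes max: "\<forall>p. emp_exp xs p \<le> emp_exp xs phat"
    and "xs \<noteq> []" and "z \<notin> set xs"
  shows "pmf phat z = 0"
proof (rule ccontr)
  assume "pmf phat z \<noteq> 0"
  then have pos: "pmf phat z > 0"
    using pmf_nonneg[of phat z] by linarith
  obtain x where x: "x \<in> set xs"
    using \<open>xs \<noteq> []\<close> by (cases xs) auto
  with \<open>z \<notin> set xs\<close> have "x \<noteq> z" by auto
  define p where "p = map_pmf (\<lambda>y. if y = z then x else y) phat"
  have "\<forall>y\<in>set xs. pmf phat y \<le> pmf p y"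
    using \<open>z \<notin> set xs\<close> pmf_map_pmf_merge[OF \<open>x \<noteq> z\<close>] pmf_nonneg[of phat z]
    unfolding p_def by auto
  moreover have "pmf phat x < pmf p x"
    using pos pmf_map_pmf_merge[OF \<open>x \<noteq> z\<close>] unfolding p_def by simp
  ultimately have "emp_exp xs phat < emp_exp xs p"
    by (rule emp_exp_strict_mono[OF _ x])
  with max show False
    by (meson not_le)
qed

theorem mainTheorem4:
  fixes pstar phat :: "'a::countable pmf" and xs :: "'a list"
  assumes "length xs \<ge> 1"
    and "\<forall>x\<in>set xs. pmf pstar x > 0"
    and "\<forall>p :: 'a pmf. emp_exp xs p \<le> emp_exp xs phat"
  shows "sound pstar phat"
  unfolding sound_def
proof (intro allI impI)
  fix z
  assume "pmf phat z > 0"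
  moreover have "xs \<noteq> []"
    using assms(1) by auto
  ultimately have "z \<in> set xs"
    using emp_exp_maximiser_vanishes_off_sample[OF assms(3)] by force
  with assms(2) show "pmf pstar z > 0"
    by blast
qed

end
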